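(* Let $(A,B)$ be a finite-dimensional even-symmetric associative superalgebra over an algebraically closed field $\mathbb{K}$ of characteristic zero such that $A_{\bar 0}$ is a semi-simple $A_{\bar 0}$-bimodule. If $\mathrm{Ann}(A)=\{0\}$, then $A$ is an orthogonal direct sum of simple even-symmetric associative superalgebras, i.e. $A=A_1\oplus\cdots\oplus A_m$ where the $A_k$ are pairwise $B$-orthogonal graded two-sided ideals, each simple as an associative superalgebra, with $B|_{A_k\times A_k}$ non-degenerate.
   Context: A superalgebra is $\mathbb{Z}_2$-graded, $A=A_{\bar 0}\oplus A_{\bar 1}$, $A_\alpha A_\beta\subseteq A_{\alpha+\beta}$. An even-symmetric structure on $A$ is a bilinear form $B$ with $B(A_{\bar 0},A_{\bar 1})=B(A_{\bar 1},A_{\bar 0})=0$ which is supersymmetric ($B(x,y)=(-1)^{|x||y|}B(y,x)$), associative ($B(xy,z)=B(x,yz)$) and non-degenerate. A superalgebra is simple if its product is non-zero and it has no graded two-sided ideals other than $\{0\}$ and itself. $A_{\bar 0}$ is an $A_{\bar 0}$-bimodule via multiplication, semi-simple if every sub-bimodule has a complementary sub-bimodule. $\mathrm{Ann}(A)=\{x: xA=Ax=\{0\}\}$. *)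

theory Defs
  imports Main "HOL-Computational_Algebra.Polynomial"
begin

definition superalgebra ::
  "('k::field \<Rightarrow> 'v::ab_group_add \<Rightarrow> 'v) \<Rightarrow> ('v \<Rightarrow> 'v \<Rightarrow> 'v) \<Rightarrow> 'v set \<Rightarrow> 'v set \<Rightarrow> bool" where
  "superalgebra scale mul A0 A1 \<longleftrightarrow>
     vector_space scale \<and>
     (\<forall>z. Vector_Spaces.linear scale scale (\<lambda>x. mul x z) \<and> Vector_Spaces.linear scale scale (mul z)) \<and>
     module.subspace scale A0 \<and> module.subspace scale A1 \<and>
     A0 \<inter> A1 = {0} \<and> (\<forall>v. \<exists>a\<in>A0. \<exists>b\<in>A1. v = a + b) \<and>
     (\<forall>x\<in>A0. \<forall>y\<in>A0. mul x y \<in> A0) \<and> (\<forall>x\<in>A0. \<forall>y\<in>A1. mul x y \<in> A1) \<and>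
     (\<forall>x\<in>A1. \<forall>y\<in>A0. mul x y \<in> A1) \<and> (\<forall>x\<in>A1. \<forall>y\<in>A1. mul x y \<in> A0)"

definition assoc_mul :: "('v \<Rightarrow> 'v \<Rightarrow> 'v) \<Rightarrow> bool" where
  "assoc_mul mul \<longleftrightarrow> (\<forall>x y z. mul (mul x y) z = mul x (mul y z))"

definition finite_dim :: "('k::field \<Rightarrow> 'v::ab_group_add \<Rightarrow> 'v) \<Rightarrow> bool" where
  "finite_dim scale \<longleftrightarrow> (\<exists>Basis. finite_dimensional_vector_space scale Basis)"

definition even_symmetric ::
  "('k::field \<Rightarrow> 'v::ab_group_add \<Rightarrow> 'v) \<Rightarrow> ('v \<Rightarrow> 'v \<Rightarrow> 'v) \<Rightarrow> 'v set \<Rightarrow> 'v set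
    \<Rightarrow> ('v \<Rightarrow> 'v \<Rightarrow> 'k) \<Rightarrow> bool" where
  "even_symmetric scale mul A0 A1 B \<longleftrightarrow>
     (\<forall>z. Vector_Spaces.linear scale (*) (\<lambda>x. B x z) \<and> Vector_Spaces.linear scale (*) (B z)) \<and>
     (\<forall>x\<in>A0. \<forall>y\<in>A1. B x y = 0 \<and> B y x = 0) \<and>
     (\<forall>x\<in>A0. \<forall>y. B x y = B y x) \<and>
     (\<forall>x\<in>A1. \<forall>y\<in>A1. B x y = - B y x) \<and>
     (\<forall>x y z. B (mul x y) z = B x (mul y z)) \<and>
     (\<forall>x. (\<forall>y. B x y = 0) \<longrightarrow> x = 0)"

definition sub_bimodule ::
  "('k::field \<Rightarrow> 'v::ab_group_add \<Rightarrow> 'v) \<Rightarrow> ('v \<Rightarrow> 'v \<Rightarrow> 'v) \<Rightarrow> 'v set \<Rightarrow> 'v set \<Rightarrow> bool" where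
  "sub_bimodule scale mul A0 M \<longleftrightarrow> M \<subseteq> A0 \<and> module.subspace scale M \<and>
     (\<forall>a\<in>A0. \<forall>x\<in>M. mul a x \<in> M \<and> mul x a \<in> M)"

definition semisimple_even_bimodule ::
  "('k::field \<Rightarrow> 'v::ab_group_add \<Rightarrow> 'v) \<Rightarrow> ('v \<Rightarrow> 'v \<Rightarrow> 'v) \<Rightarrow> 'v set \<Rightarrow> bool" where
  "semisimple_even_bimodule scale mul A0 \<longleftrightarrow>
     (\<forall>M. sub_bimodule scale mul A0 M \<longrightarrow>
        (\<exists>N. sub_bimodule scale mul A0 N \<and> M \<inter> N = {0} \<and> (\<forall>a\<in>A0. \<exists>x\<in>M. \<exists>y\<in>N. a = x + y)))"

definition Ann :: "('v::zero \<Rightarrow> 'v \<Rightarrow> 'v) \<Rightarrow> 'v set" where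
  "Ann mul = {x. \<forall>y. mul x y = 0 \<and> mul y x = 0}"

definition graded_ideal ::
  "('k::field \<Rightarrow> 'v::ab_group_add \<Rightarrow> 'v) \<Rightarrow> ('v \<Rightarrow> 'v \<Rightarrow> 'v) \<Rightarrow> 'v set \<Rightarrow> 'v set
    \<Rightarrow> 'v set \<Rightarrow> 'v set \<Rightarrow> bool" where
  "graded_ideal scale mul A0 A1 I J \<longleftrightarrow> J \<subseteq> I \<and> module.subspace scale J \<and>
     (\<forall>x\<in>I. \<forall>j\<in>J. mul x j \<in> J \<and> mul j x \<in> J) \<and>
     (\<forall>j\<in>J. \<exists>a\<in>J \<inter> A0. \<exists>b\<in>J \<inter> A1. j = a + b)"

definition simple_sub ::
  "('k::field \<Rightarrow> 'v::ab_group_add \<Rightarrow> 'v) \<Rightarrow> ('v \<Rightarrow> 'v \<Rightarrow> 'v) \<Rightarrow> 'v set \<Rightarrow> 'v set \<Rightarrow> 'v set \<Rightarrow> bool" where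
  "simple_sub scale mul A0 A1 I \<longleftrightarrow> (\<exists>x\<in>I. \<exists>y\<in>I. mul x y \<noteq> 0) \<and>
     (\<forall>J. graded_ideal scale mul A0 A1 I J \<longrightarrow> J = {0} \<or> J = I)"

end

theory Submission
  imports Defs
begin

text \<open>
  A graded ideal \<open>K\<close> with \<open>K K = 0\<close> vanishes: its even part is a sub-bimodule of \<open>A\<^sub>0\<close>,
  so it has a complement \<open>N\<close>, and products of the even part with \<open>N\<close> lie in both, hence
  vanish; so the even part annihilates \<open>A\<^sub>0\<close>, and playing this against the invariance and
  non-degeneracy of \<open>B\<close> and \<open>Ann(A) = 0\<close> kills first the even and then the odd part of \<open>K\<close>.
  Consequently \<open>I \<inter> I\<^sup>\<bottom> = 0\<close> for every graded ideal \<open>I\<close> (this intersection squares to zero),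
  so \<open>A = I \<oplus> I\<^sup>\<bottom>\<close>, where \<open>I\<^sup>\<bottom>\<close> is a graded ideal annihilating \<open>I\<close>. A nonzero graded
  ideal of least dimension is then simple, since its graded ideals are ideals of \<open>A\<close>, and
  splitting it off and recursing into its orthogonal complement gives the decomposition by
  induction on the dimension.
\<close>

lemma sum_decomposition_fun_upd:
  fixes J :: "nat \<Rightarrow> 'a::ab_group_add set"
  assumes J: "\<forall>t\<in>T. \<exists>f. (\<forall>k<m. f k \<in> J k) \<and> t = (\<Sum>k<m. f k)"
    and S: "\<forall>v\<in>S. \<exists>i\<in>I. \<exists>t\<in>T. v = i + t"
  shows "\<forall>v\<in>S. \<exists>f. (\<forall>k<Suc m. f k \<in> (J(m := I)) k) \<and> v = (\<Sum>k<Suc m. f k)"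
proof
  fix v assume "v \<in> S"
  then obtain i t where i: "i \<in> I" and t: "t \<in> T" and v: "v = i + t" using S by blast
  obtain f where f: "\<forall>k<m. f k \<in> J k" "t = (\<Sum>k<m. f k)" using J t by blast
  have "(\<Sum>k<Suc m. (f(m := i)) k) = (\<Sum>k<m. f k) + i"
    by (simp add: sum.lessThan_Suc)
  with f i v have "(\<forall>k<Suc m. (f(m := i)) k \<in> (J(m := I)) k) \<and> v = (\<Sum>k<Suc m. (f(m := i)) k)"
    by (simp add: less_Suc_eq add.commute)
  then show "\<exists>f. (\<forall>k<Suc m. f k \<in> (J(m := I)) k) \<and> v = (\<Sum>k<Suc m. f k)" by blast
qed

context module
begin

lemma independent_sum_fun_upd:
  assumes T: "subspace T" and J: "\<And>k. k < m \<Longrightarrow> J k \<subseteq> T" and trivial: "I \<inter> T = {0}"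
    and indep: "\<forall>f. (\<forall>k<m. f k \<in> J k) \<and> (\<Sum>k<m. f k) = 0 \<longrightarrow> (\<forall>k<m. f k = 0)"
  shows "\<forall>f. (\<forall>k<Suc m. f k \<in> (J(m := I)) k) \<and> (\<Sum>k<Suc m. f k) = 0 \<longrightarrow> (\<forall>k<Suc m. f k = 0)"
proof (rule allI, rule impI)
  fix f assume "(\<forall>k<Suc m. f k \<in> (J(m := I)) k) \<and> (\<Sum>k<Suc m. f k) = 0"
  then have f: "\<forall>k<Suc m. f k \<in> (J(m := I)) k" "(\<Sum>k<Suc m. f k) = 0" by blast+
  have fJ: "f k \<in> J k" if "k < m" for k
    using f(1) that by (auto dest: spec[of _ k])
  then have "(\<Sum>k<m. f k) \<in> T"
    using J by (intro subspace_sum[OF T]) auto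
  moreover have "f m = - (\<Sum>k<m. f k)"
    using f(2) by (simp add: eq_neg_iff_add_eq_0 add.commute)
  ultimately have "f m \<in> I \<inter> T"
    using f(1) subspace_neg[OF T] by auto
  then have "f m = 0" using trivial by blast
  with f(2) have "(\<Sum>k<m. f k) = 0" by simp
  with indep fJ have "\<forall>k<m. f k = 0" by blast
  with \<open>f m = 0\<close> show "\<forall>k<Suc m. f k = 0" by (auto simp: less_Suc_eq)
qed

end

context finite_dimensional_vector_space
begin

lemma subspace_kernel_functional:
  assumes "Vector_Spaces.linear scale (*) f"
  shows "subspace {v. f v = 0}"
proof -
  interpret f: Vector_Spaces.linear scale "(*)" f by (rule assms)
  show ?thesis by (rule f.subspace_kernel)
qed

lemma dim_le_dim_Int_kernel_plus_1:
  assumes W: "subspace W" and f: "Vector_Spaces.linear scale (*) f"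
  shows "dim W \<le> dim (W \<inter> {v. f v = 0}) + 1"
proof (cases "W \<subseteq> {v. f v = 0}")
  case True
  then show ?thesis by (simp add: Int_absorb2)
next
  case False
  then obtain w0 where w0: "w0 \<in> W" "f w0 \<noteq> 0" by blast
  let ?K = "W \<inter> {v. f v = 0}"
  have "W \<subseteq> span (insert w0 ?K)"
  proof
    fix w assume w: "w \<in> W"
    define c where "c = f w / f w0"
    interpret f: Vector_Spaces.linear scale "(*)" f by (rule f)
    have "f (w - scale c w0) = 0"
      using w0(2) by (simp add: f.diff f.scale c_def)
    with W w w0(1) have "w - scale c w0 \<in> ?K"
      by (simp add: subspace_diff subspace_scale)
    then have "w - scale c w0 + scale c w0 \<in> span (insert w0 ?K)"
      by (intro span_add span_scale) (auto intro: span_base)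
    then show "w \<in> span (insert w0 ?K)" by simp
  qed
  then have "dim W \<le> dim (insert w0 ?K)" by (rule subset_le_dim)
  also have "\<dots> \<le> dim ?K + 1" by (simp add: dim_insert)
  finally show ?thesis .
qed

lemma dim_le_dim_Int_kernels_plus_card:
  assumes "finite F" and W: "subspace W"
    and f: "\<And>i. i \<in> F \<Longrightarrow> Vector_Spaces.linear scale (*) (f i)"
  shows "dim W \<le> dim (W \<inter> {v. \<forall>i\<in>F. f i v = 0}) + card F"
  using assms(1,3)
proof (induction F rule: finite_induct)
  case empty
  then show ?case by simp
next
  case (insert i F)
  let ?W = "W \<inter> {v. \<forall>i\<in>F. f i v = 0}"
  have "{v. \<forall>i\<in>F. f i v = 0} = (\<Inter>i\<in>F. {v. f i v = 0})" by blast
  then have "subspace ?W"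
    using insert.prems W by (simp add: subspace_inter subspace_Int subspace_kernel_functional)
  then have "dim ?W \<le> dim (?W \<inter> {v. f i v = 0}) + 1"
    using insert.prems by (intro dim_le_dim_Int_kernel_plus_1) auto
  moreover have "?W \<inter> {v. f i v = 0} = W \<inter> {v. \<forall>j\<in>insert i F. f j v = 0}" by blast
  ultimately show ?case using insert by simp
qed

end

locale even_symmetric_superalgebra =
  fixes scale :: "'k::field \<Rightarrow> 'v::ab_group_add \<Rightarrow> 'v" and Basis :: "'v set"
    and mul :: "'v \<Rightarrow> 'v \<Rightarrow> 'v" and A0 A1 :: "'v set" and B :: "'v \<Rightarrow> 'v \<Rightarrow> 'k"
  assumes finite_dimensional: "finite_dimensional_vector_space scale Basis"
    and superalgebra: "superalgebra scale mul A0 A1"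
    and assoc: "assoc_mul mul"
    and even_symmetric: "even_symmetric scale mul A0 A1 B"
begin

sublocale finite_dimensional_vector_space scale Basis
  by (rule finite_dimensional)

abbreviation gr_ideal :: "'v set \<Rightarrow> bool" where
  "gr_ideal I \<equiv> graded_ideal scale mul A0 A1 UNIV I"

lemma mul_add_left: "mul (x + y) z = mul x z + mul y z"
  and mul_add_right: "mul z (x + y) = mul z x + mul z y"
  using superalgebra unfolding superalgebra_def Vector_Spaces.linear_iff by blast+

lemma mul_zero_left [simp]: "mul 0 z = 0"
  using mul_add_left[of 0 0 z] by simp

lemma mul_zero_right [simp]: "mul z 0 = 0"
  using mul_add_right[of z 0 0] by simp

lemma mul_assoc: "mul (mul x y) z = mul x (mul y z)"
  using assoc unfolding assoc_mul_def by blast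

lemma even_subspace: "subspace A0"
  and odd_subspace: "subspace A1"
  and even_Int_odd: "A0 \<inter> A1 = {0}"
  using superalgebra unfolding superalgebra_def by blast+

lemma graded_decompE:
  obtains a b where "a \<in> A0" "b \<in> A1" "v = a + b"
  using superalgebra unfolding superalgebra_def by blast

lemma mul_even_even: "x \<in> A0 \<Longrightarrow> y \<in> A0 \<Longrightarrow> mul x y \<in> A0"
  and mul_even_odd: "x \<in> A0 \<Longrightarrow> y \<in> A1 \<Longrightarrow> mul x y \<in> A1"
  and mul_odd_even: "x \<in> A1 \<Longrightarrow> y \<in> A0 \<Longrightarrow> mul x y \<in> A1"
  and mul_odd_odd: "x \<in> A1 \<Longrightarrow> y \<in> A1 \<Longrightarrow> mul x y \<in> A0"
  using superalgebra unfolding superalgebra_def by blast+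

lemma graded_decomp_unique:
  assumes "a \<in> A0" "b \<in> A1" "a' \<in> A0" "b' \<in> A1" "a + b = a' + b'"
  shows "a = a'" "b = b'"
proof -
  have "a - a' = b' - b" using assms(5) by (simp add: algebra_simps)
  moreover have "a - a' \<in> A0" "b' - b \<in> A1"
    using assms even_subspace odd_subspace subspace_diff by blast+
  ultimately have "b' - b \<in> A0 \<inter> A1" by simp
  then have "b' - b = 0" using even_Int_odd by blast
  with \<open>a - a' = b' - b\<close> show "a = a'" "b = b'" by simp_all
qed

lemma B_add_left: "B (x + y) z = B x z + B y z"
  and B_add_right: "B z (x + y) = B z x + B z y"
  and B_scale_left: "B (scale c x) z = c * B x z"
  and B_scale_right: "B z (scale c x) = c * B z x"
  using even_symmetric unfolding even_symmetric_def Vector_Spaces.linear_iff by blast+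

lemma B_linear_right: "Vector_Spaces.linear scale (*) (B z)"
  using even_symmetric unfolding even_symmetric_def by blast

lemma B_zero_left [simp]: "B 0 z = 0"
  using B_scale_left[of 0 0 z] by simp

lemma B_zero_right [simp]: "B z 0 = 0"
  using B_scale_right[of z 0 0] by simp

lemma B_mul_assoc: "B (mul x y) z = B x (mul y z)"
  and B_nondegenerate: "(\<And>y. B x y = 0) \<Longrightarrow> x = 0"
  and B_even_odd: "x \<in> A0 \<Longrightarrow> y \<in> A1 \<Longrightarrow> B x y = 0"
  and B_odd_even: "x \<in> A0 \<Longrightarrow> y \<in> A1 \<Longrightarrow> B y x = 0"
  and B_even_sym: "x \<in> A0 \<Longrightarrow> B x y = B y x"
  using even_symmetric unfolding even_symmetric_def by blast+

lemma B_odd_antisym: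
  assumes "x \<in> A1"
  shows "B x y = - B y x"
proof -
  obtain a b where "a \<in> A0" "b \<in> A1" "y = a + b" by (rule graded_decompE)
  moreover have "B x b = - B b x" if "b \<in> A1"
    using assms that even_symmetric unfolding even_symmetric_def by blast
  ultimately show ?thesis
    using assms by (simp add: B_add_left B_add_right B_even_odd B_odd_even)
qed

lemma graded_ideal_UNIV: "gr_ideal UNIV"
  using superalgebra unfolding graded_ideal_def superalgebra_def by auto

lemma gr_idealD:
  assumes "gr_ideal I"
  shows "subspace I" "j \<in> I \<Longrightarrow> mul x j \<in> I" "j \<in> I \<Longrightarrow> mul j x \<in> I"
    and "j \<in> I \<Longrightarrow> \<exists>a\<in>I \<inter> A0. \<exists>b\<in>I \<inter> A1. j = a + b"
  using assms unfolding graded_ideal_def by blast+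

lemma graded_ideal_Int:
  assumes I: "gr_ideal I" and J: "gr_ideal J"
  shows "gr_ideal (I \<inter> J)"
  unfolding graded_ideal_def
proof (intro conjI ballI)
  show "subspace (I \<inter> J)" using gr_idealD(1) I J subspace_inter by blast
  fix x j assume "j \<in> I \<inter> J"
  then show "mul x j \<in> I \<inter> J" "mul j x \<in> I \<inter> J"
    using gr_idealD(2,3)[OF I] gr_idealD(2,3)[OF J] by blast+
next
  fix j assume j: "j \<in> I \<inter> J"
  obtain a b where ab: "a \<in> I \<inter> A0" "b \<in> I \<inter> A1" "j = a + b" using gr_idealD(4)[OF I] j by blast
  obtain a' b' where ab': "a' \<in> J \<inter> A0" "b' \<in> J \<inter> A1" "j = a' + b'" using gr_idealD(4)[OF J] j by blast
  have "a = a'" "b = b'" using graded_decomp_unique[of a b a' b'] ab ab' by auto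
  with ab ab' show "\<exists>a\<in>I \<inter> J \<inter> A0. \<exists>b\<in>I \<inter> J \<inter> A1. j = a + b" by blast
qed simp

definition perp :: "'v set \<Rightarrow> 'v set" where
  "perp I = {v. \<forall>s\<in>I. B s v = 0}"

lemma mem_perp_iff_right:
  assumes I: "gr_ideal I"
  shows "v \<in> perp I \<longleftrightarrow> (\<forall>s\<in>I. B v s = 0)"
proof -
  have homogeneous: "(\<forall>s\<in>I. P s) \<longleftrightarrow> (\<forall>s\<in>I \<inter> A0 \<union> I \<inter> A1. P s)"
    if add: "\<And>a b. P a \<Longrightarrow> P b \<Longrightarrow> P (a + b)" for P
  proof (intro iffI ballI)
    fix s assume hom: "\<forall>s\<in>I \<inter> A0 \<union> I \<inter> A1. P s" and "s \<in> I"
    then obtain a b where "a \<in> I \<inter> A0" "b \<in> I \<inter> A1" "s = a + b"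
      using gr_idealD(4)[OF I] by blast
    with hom show "P s" by (simp add: add)
  qed auto
  have pointwise: "B s v = 0 \<longleftrightarrow> B v s = 0" if "s \<in> A0 \<union> A1" for s
    using that B_even_sym[of s v] B_odd_antisym[of s v] by (cases "s \<in> A0") auto
  have "(\<forall>s\<in>I. B s v = 0) \<longleftrightarrow> (\<forall>s\<in>I \<inter> A0 \<union> I \<inter> A1. B s v = 0)"
    by (rule homogeneous) (simp add: B_add_left)
  also have "\<dots> \<longleftrightarrow> (\<forall>s\<in>I \<inter> A0 \<union> I \<inter> A1. B v s = 0)"
    by (rule ball_cong[OF refl pointwise]) blast
  also have "\<dots> \<longleftrightarrow> (\<forall>s\<in>I. B v s = 0)"
    by (rule homogeneous[symmetric]) (simp add: B_add_right)
  finally show ?thesis unfolding perp_def mem_Collect_eq .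
qed

lemma subspace_perp: "subspace (perp I)"
  by (rule subspaceI) (auto simp: perp_def B_add_right B_scale_right)

lemma graded_ideal_perp:
  assumes I: "gr_ideal I"
  shows "gr_ideal (perp I)"
  unfolding graded_ideal_def
proof (intro conjI ballI)
  fix x j assume j: "j \<in> perp I"
  show "mul x j \<in> perp I"
    using j gr_idealD(3)[OF I] by (auto simp: perp_def simp flip: B_mul_assoc)
  show "mul j x \<in> perp I"
    using j gr_idealD(2)[OF I] by (simp add: mem_perp_iff_right[OF I] B_mul_assoc)
next
  fix j assume j: "j \<in> perp I"
  obtain v0 v1 where v: "v0 \<in> A0" "v1 \<in> A1" "j = v0 + v1" by (rule graded_decompE)
  have "B s v0 = 0 \<and> B s v1 = 0" if s: "s \<in> I" for s
  proof -
    obtain a b where ab: "a \<in> I \<inter> A0" "b \<in> I \<inter> A1" "s = a + b"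
      using gr_idealD(4)[OF I s] by blast
    have "B a j = 0" "B b j = 0" using j ab unfolding perp_def by auto
    with v ab show ?thesis by (simp add: B_add_left B_add_right B_even_odd B_odd_even)
  qed
  then have "v0 \<in> perp I" "v1 \<in> perp I" unfolding perp_def by auto
  with v show "\<exists>a\<in>perp I \<inter> A0. \<exists>b\<in>perp I \<inter> A1. j = a + b" by blast
qed (simp_all add: subspace_perp)

lemma mul_ideal_perp_zero:
  assumes I: "gr_ideal I" and x: "x \<in> I" and y: "y \<in> perp I"
  shows "mul x y = 0" "mul y x = 0"
proof -
  have "B (mul x y) z = 0" for z
    using x y gr_idealD(3)[OF graded_ideal_perp[OF I] y] by (simp add: B_mul_assoc perp_def)
  then show "mul x y = 0" by (rule B_nondegenerate)
  have "B (mul y x) z = 0" for z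
    using y gr_idealD(3)[OF I x] by (simp add: B_mul_assoc mem_perp_iff_right[OF I])
  then show "mul y x = 0" by (rule B_nondegenerate)
qed

lemma B_ideal_perp:
  assumes I: "gr_ideal I" and "x \<in> I" "y \<in> perp I"
  shows "B x y = 0" "B y x = 0"
  using assms mem_perp_iff_right[OF I, of y] unfolding perp_def by auto

lemma dim_le_dim_perp_plus_dim:
  assumes "subspace I"
  shows "dim (UNIV :: 'v set) \<le> dim (perp I) + dim I"
proof -
  obtain F where F: "F \<subseteq> I" "independent F" "I \<subseteq> span F" "card F = dim I"
    using basis_exists[of I] by blast
  have "perp I = UNIV \<inter> {v. \<forall>b\<in>F. B b v = 0}"
  proof (intro equalityI subsetI)
    fix v assume "v \<in> UNIV \<inter> {v. \<forall>b\<in>F. B b v = 0}"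
    then have "span F \<subseteq> {s. B s v = 0}"
      by (intro span_minimal) (auto intro: subspaceI simp: B_add_left B_scale_left)
    with F(3) show "v \<in> perp I" unfolding perp_def by blast
  qed (use F(1) in \<open>auto simp: perp_def\<close>)
  moreover have "finite F" using F(2) by (rule finiteI_independent)
  ultimately show ?thesis
    using dim_le_dim_Int_kernels_plus_card[of F UNIV B] B_linear_right F(4) by simp
qed

lemma ideal_plus_perp:
  assumes I: "subspace I" and trivial: "I \<inter> perp I = {0}"
  shows "\<exists>i\<in>I. \<exists>p\<in>perp I. v = i + p"
proof -
  let ?sums = "{x + y |x y. x \<in> I \<and> y \<in> perp I}"
  have "dim ?sums + dim (I \<inter> perp I) = dim I + dim (perp I)"
    by (rule dim_sums_Int[OF I subspace_perp])
  with trivial dim_le_dim_perp_plus_dim[OF I] have "dim (UNIV :: 'v set) \<le> dim ?sums"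
    by simp
  then have "?sums = UNIV"
    using subspace_dim_equal[OF subspace_sums[OF I subspace_perp] subspace_UNIV] by blast
  then show ?thesis by blast
qed

end

locale semisimple_even_symmetric_superalgebra =
  even_symmetric_superalgebra scale Basis mul A0 A1 B
  for scale :: "'k::field \<Rightarrow> 'v::ab_group_add \<Rightarrow> 'v" and Basis mul A0 A1 B +
  assumes semisimple: "semisimple_even_bimodule scale mul A0"
    and Ann_trivial: "Ann mul = {0}"
begin

lemma zero_if_annihilates_homogeneous:
  assumes "\<And>c. c \<in> A0 \<union> A1 \<Longrightarrow> mul v c = 0 \<and> mul c v = 0"
  shows "v = 0"
proof -
  have "mul v c = 0 \<and> mul c v = 0" for c
  proof -
    obtain c0 c1 where "c0 \<in> A0" "c1 \<in> A1" "c = c0 + c1" by (rule graded_decompE)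
    with assms show ?thesis by (simp add: mul_add_left mul_add_right)
  qed
  then have "v \<in> Ann mul" unfolding Ann_def by blast
  with Ann_trivial show ?thesis by blast
qed

lemma zero_if_orthogonal_to_homogeneous_products:
  assumes "\<And>c d. c \<in> A0 \<union> A1 \<Longrightarrow> d \<in> A0 \<union> A1 \<Longrightarrow> B v (mul c d) = 0"
  shows "v = 0"
proof -
  have products: "B v (mul c d) = 0" for c d
  proof -
    obtain c0 c1 where "c0 \<in> A0" "c1 \<in> A1" "c = c0 + c1" by (rule graded_decompE)
    moreover obtain d0 d1 where "d0 \<in> A0" "d1 \<in> A1" "d = d0 + d1" by (rule graded_decompE)
    ultimately show ?thesis
      using assms by (simp add: mul_add_left mul_add_right B_add_right)
  qed
  have right: "mul v c = 0" for c
    by (rule B_nondegenerate) (simp add: B_mul_assoc products)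
  have "mul c v = 0" for c
    by (rule B_nondegenerate) (simp add: B_mul_assoc right)
  with right have "v \<in> Ann mul" unfolding Ann_def by blast
  with Ann_trivial show ?thesis by blast
qed

context
  fixes K
  assumes K: "gr_ideal K"
    and square_zero: "\<And>x y. x \<in> K \<Longrightarrow> y \<in> K \<Longrightarrow> mul x y = 0"
begin

lemma square_zero_even_annihilates_even:
  assumes x: "x \<in> K \<inter> A0" and a: "a \<in> A0"
  shows "mul x a = 0" "mul a x = 0"
proof -
  have bimodule: "sub_bimodule scale mul A0 (K \<inter> A0)"
    unfolding sub_bimodule_def
    using gr_idealD(1-3)[OF K] even_subspace mul_even_even by (auto intro: subspace_inter)
  obtain N where N: "sub_bimodule scale mul A0 N" "K \<inter> A0 \<inter> N = {0}"
    "\<forall>a\<in>A0. \<exists>x\<in>K \<inter> A0. \<exists>y\<in>N. a = x + y"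
    using semisimple[unfolded semisimple_even_bimodule_def, rule_format, OF bimodule] by blast
  obtain i n where i: "i \<in> K \<inter> A0" and n: "n \<in> N" and "a = i + n"
    using N(3) a by blast
  have "mul x n \<in> K \<inter> A0 \<inter> N" "mul n x \<in> K \<inter> A0 \<inter> N"
    using N(1) x n gr_idealD(2,3)[OF K] mul_even_even unfolding sub_bimodule_def by auto
  then have "mul x n = 0" "mul n x = 0" using N(2) by blast+
  with \<open>a = i + n\<close> i x square_zero[of x i] square_zero[of i x]
  show "mul x a = 0" "mul a x = 0" by (simp_all add: mul_add_left mul_add_right)
qed

lemma square_zero_odd_sandwich:
  assumes x: "x \<in> K \<inter> A0" and p: "p \<in> A1" and q: "q \<in> A1"
  shows "mul q (mul x p) = 0"
proof (rule zero_if_annihilates_homogeneous)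
  fix c assume "c \<in> A0 \<union> A1"
  then show "mul (mul q (mul x p)) c = 0 \<and> mul c (mul q (mul x p)) = 0"
  proof
    assume c: "c \<in> A0"
    have "mul q (mul x p) \<in> K \<inter> A0"
      using x p q gr_idealD(2,3)[OF K] mul_even_odd mul_odd_odd by blast
    with c show ?thesis by (simp add: square_zero_even_annihilates_even)
  next
    assume c: "c \<in> A1"
    have "mul x (mul p c) = 0" "mul (mul c q) x = 0"
      using x p q c mul_odd_odd by (simp_all add: square_zero_even_annihilates_even)
    moreover have "mul (mul q (mul x p)) c = mul q (mul x (mul p c))"
      and "mul c (mul q (mul x p)) = mul (mul (mul c q) x) p"
      by (simp_all add: mul_assoc)
    ultimately show ?thesis by simp
  qed
qed

lemma square_zero_even_annihilates_odd:
  assumes x: "x \<in> K \<inter> A0" and p: "p \<in> A1"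
  shows "mul x p = 0"
proof (rule zero_if_orthogonal_to_homogeneous_products)
  have z: "mul x p \<in> A1" using x p mul_even_odd by blast
  fix c d assume "c \<in> A0 \<union> A1" "d \<in> A0 \<union> A1"
  then consider "c \<in> A0" "d \<in> A0" | "c \<in> A0" "d \<in> A1" | "c \<in> A1" "d \<in> A0" | "c \<in> A1" "d \<in> A1"
    by blast
  then show "B (mul x p) (mul c d) = 0"
  proof cases
    case 2
    have "B (mul x p) (mul c d) = - B c (mul d (mul x p))"
      using B_odd_antisym[OF z] by (simp add: B_mul_assoc)
    with 2 x p show ?thesis by (simp add: square_zero_odd_sandwich)
  next
    case 3
    have "B (mul x p) (mul c d) = B (mul x (mul p c)) d"
      by (simp add: B_mul_assoc mul_assoc)
    with 3 x p mul_odd_odd show ?thesis by (simp add: square_zero_even_annihilates_even)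
  qed (use z in \<open>simp_all add: B_odd_even mul_even_even mul_odd_odd\<close>)
qed

lemma square_zero_even_part_zero:
  assumes x: "x \<in> K \<inter> A0"
  shows "x = 0"
proof (rule zero_if_orthogonal_to_homogeneous_products)
  fix c d assume "c \<in> A0 \<union> A1" "d \<in> A0 \<union> A1"
  then consider "c \<in> A0" "d \<in> A0" | "c \<in> A0" "d \<in> A1" | "c \<in> A1" "d \<in> A0" | "c \<in> A1" "d \<in> A1"
    by blast
  then show "B x (mul c d) = 0"
  proof cases
    case 1
    with x show ?thesis by (simp add: square_zero_even_annihilates_even flip: B_mul_assoc)
  next
    case 4
    with x show ?thesis by (simp add: square_zero_even_annihilates_odd flip: B_mul_assoc)
  qed (use x in \<open>simp_all add: B_even_odd mul_even_odd mul_odd_even\<close>)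
qed

lemma square_zero_odd_part_zero:
  assumes z: "z \<in> K \<inter> A1"
  shows "z = 0"
proof (rule zero_if_orthogonal_to_homogeneous_products)
  fix c d assume "c \<in> A0 \<union> A1" "d \<in> A0 \<union> A1"
  then consider "c \<in> A0" "d \<in> A0" | "c \<in> A0" "d \<in> A1" | "c \<in> A1" "d \<in> A0" | "c \<in> A1" "d \<in> A1"
    by blast
  then show "B z (mul c d) = 0"
  proof cases
    case 2
    then have "mul d z = 0"
      using z gr_idealD(2)[OF K] mul_odd_odd square_zero_even_part_zero by blast
    then show ?thesis using B_odd_antisym[of z "mul c d"] z by (simp add: B_mul_assoc)
  next
    case 3
    then have "mul z c = 0"
      using z gr_idealD(3)[OF K] mul_odd_odd square_zero_even_part_zero by blast
    then show ?thesis by (simp flip: B_mul_assoc)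
  qed (use z in \<open>simp_all add: B_odd_even mul_even_even mul_odd_odd\<close>)
qed

lemma square_zero_graded_ideal_trivial: "K = {0}"
proof -
  have "j = 0" if "j \<in> K" for j
    using gr_idealD(4)[OF K that] square_zero_even_part_zero square_zero_odd_part_zero by force
  then show ?thesis using subspace_0[OF gr_idealD(1)[OF K]] by blast
qed

end

lemma ideal_Int_perp_trivial:
  assumes I: "gr_ideal I"
  shows "I \<inter> perp I = {0}"
proof (rule square_zero_graded_ideal_trivial)
  show "gr_ideal (I \<inter> perp I)"
    using I by (simp add: graded_ideal_Int graded_ideal_perp)
  show "mul x y = 0" if "x \<in> I \<inter> perp I" "y \<in> I \<inter> perp I" for x y
    using that mul_ideal_perp_zero(1)[OF I] by blast
qed

lemma B_nondegenerate_on_ideal: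
  assumes I: "gr_ideal I" and "x \<in> I" and "\<forall>y\<in>I. B x y = 0"
  shows "x = 0"
  using assms ideal_Int_perp_trivial[OF I] by (auto simp: mem_perp_iff_right[OF I])

lemma graded_ideal_of_ideal:
  assumes I: "gr_ideal I" and K: "graded_ideal scale mul A0 A1 I K"
  shows "gr_ideal K"
  unfolding graded_ideal_def
proof (intro conjI ballI)
  fix x j assume j: "j \<in> K"
  obtain i p where "i \<in> I" "p \<in> perp I" "x = i + p"
    using ideal_plus_perp[OF gr_idealD(1)[OF I] ideal_Int_perp_trivial[OF I]] by blast
  moreover have "j \<in> I" using K j unfolding graded_ideal_def by blast
  ultimately show "mul x j \<in> K" "mul j x \<in> K"
    using K j mul_ideal_perp_zero[OF I] unfolding graded_ideal_def
    by (simp_all add: mul_add_left mul_add_right)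
qed (use K in \<open>simp_all add: graded_ideal_def\<close>)

lemma minimal_graded_ideal_simple:
  assumes I: "gr_ideal I" "I \<noteq> {0}"
    and minimal: "\<And>K. gr_ideal K \<Longrightarrow> K \<subseteq> I \<Longrightarrow> K \<noteq> {0} \<Longrightarrow> K = I"
  shows "simple_sub scale mul A0 A1 I"
  unfolding simple_sub_def
proof (intro conjI allI impI)
  show "\<exists>x\<in>I. \<exists>y\<in>I. mul x y \<noteq> 0"
  proof (rule ccontr)
    assume "\<not> (\<exists>x\<in>I. \<exists>y\<in>I. mul x y \<noteq> 0)"
    then have "I = {0}" using square_zero_graded_ideal_trivial[OF I(1)] by blast
    with I(2) show False ..
  qed
  fix K assume K: "graded_ideal scale mul A0 A1 I K"
  then have "K \<subseteq> I" by (simp add: graded_ideal_def)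
  with minimal[OF graded_ideal_of_ideal[OF I(1) K]] show "K = {0} \<or> K = I" by blast
qed

definition orthogonal_decomposition :: "'v set \<Rightarrow> nat \<Rightarrow> (nat \<Rightarrow> 'v set) \<Rightarrow> bool" where
  "orthogonal_decomposition S m I \<longleftrightarrow>
     (\<forall>k<m. gr_ideal (I k) \<and> simple_sub scale mul A0 A1 (I k) \<and> I k \<subseteq> S) \<and>
     (\<forall>j<m. \<forall>k<m. j \<noteq> k \<longrightarrow> (\<forall>x\<in>I j. \<forall>y\<in>I k. B x y = 0)) \<and>
     (\<forall>v\<in>S. \<exists>f. (\<forall>k<m. f k \<in> I k) \<and> v = (\<Sum>k<m. f k)) \<and>
     (\<forall>f. (\<forall>k<m. f k \<in> I k) \<and> (\<Sum>k<m. f k) = 0 \<longrightarrow> (\<forall>k<m. f k = 0))"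

lemma orthogonal_decomposition_insert:
  assumes S: "gr_ideal S" and I: "gr_ideal I" "simple_sub scale mul A0 A1 I" "I \<subseteq> S"
    and J: "orthogonal_decomposition (S \<inter> perp I) m J"
  shows "orthogonal_decomposition S (Suc m) (J(m := I))"
proof -
  obtain J_ideals: "\<forall>k<m. gr_ideal (J k) \<and> simple_sub scale mul A0 A1 (J k) \<and> J k \<subseteq> S \<inter> perp I"
    and J_orth: "\<forall>j<m. \<forall>k<m. j \<noteq> k \<longrightarrow> (\<forall>x\<in>J j. \<forall>y\<in>J k. B x y = 0)"
    and J_span: "\<forall>v\<in>S \<inter> perp I. \<exists>f. (\<forall>k<m. f k \<in> J k) \<and> v = (\<Sum>k<m. f k)"
    and J_indep: "\<forall>f. (\<forall>k<m. f k \<in> J k) \<and> (\<Sum>k<m. f k) = 0 \<longrightarrow> (\<forall>k<m. f k = 0)"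
    using J unfolding orthogonal_decomposition_def by (elim conjE) (rule that)
  have trivial: "I \<inter> perp I = {0}" by (rule ideal_Int_perp_trivial[OF I(1)])
  have S': "subspace (S \<inter> perp I)"
    using gr_idealD(1)[OF S] subspace_perp by (rule subspace_inter)
  let ?J = "J(m := I)"
  have ideals: "\<forall>k<Suc m. gr_ideal (?J k) \<and> simple_sub scale mul A0 A1 (?J k) \<and> ?J k \<subseteq> S"
    using J_ideals I by (auto simp: less_Suc_eq)
  have J_perp: "x \<in> perp I" if "k < m" "x \<in> J k" for k x
    using J_ideals that by blast
  have orth: "\<forall>j<Suc m. \<forall>k<Suc m. j \<noteq> k \<longrightarrow> (\<forall>x\<in>?J j. \<forall>y\<in>?J k. B x y = 0)"
    using J_orth J_perp B_ideal_perp[OF I(1)] by (auto simp: less_Suc_eq)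
  have "\<forall>v\<in>S. \<exists>i\<in>I. \<exists>t\<in>S \<inter> perp I. v = i + t"
  proof
    fix v assume "v \<in> S"
    obtain i p where i: "i \<in> I" and p: "p \<in> perp I" and v: "v = i + p"
      using ideal_plus_perp[OF gr_idealD(1)[OF I(1)] trivial] by blast
    have "v - i \<in> S"
      using subspace_diff[OF gr_idealD(1)[OF S] \<open>v \<in> S\<close>] i I(3) by blast
    with i p v show "\<exists>i\<in>I. \<exists>t\<in>S \<inter> perp I. v = i + t" by auto
  qed
  with J_span have span: "\<forall>v\<in>S. \<exists>f. (\<forall>k<Suc m. f k \<in> ?J k) \<and> v = (\<Sum>k<Suc m. f k)"
    by (rule sum_decomposition_fun_upd)
  have indep: "\<forall>f. (\<forall>k<Suc m. f k \<in> ?J k) \<and> (\<Sum>k<Suc m. f k) = 0 \<longrightarrow> (\<forall>k<Suc m. f k = 0)"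
    using J_ideals trivial subspace_0[OF S'] J_indep by (intro independent_sum_fun_upd[OF S']) auto
  show ?thesis
    unfolding orthogonal_decomposition_def using ideals orth span indep by (intro conjI)
qed

lemma orthogonal_decomposition_exists:
  assumes "gr_ideal S"
  shows "\<exists>m J. orthogonal_decomposition S m J"
  using assms
proof (induction "dim S" arbitrary: S rule: less_induct)
  case less
  show ?case
  proof (cases "S = {0}")
    case True
    then have "orthogonal_decomposition S 0 (\<lambda>_. {})"
      by (simp add: orthogonal_decomposition_def)
    then show ?thesis by blast
  next
    case False
    let ?P = "\<lambda>I. gr_ideal I \<and> I \<subseteq> S \<and> I \<noteq> {0}"
    obtain I where I: "?P I" and I_least: "\<And>K. ?P K \<Longrightarrow> dim I \<le> dim K"
      using ex_has_least_nat[of ?P S dim] less.prems False by blast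
    have "simple_sub scale mul A0 A1 I"
    proof (rule minimal_graded_ideal_simple)
      fix K assume "gr_ideal K" "K \<subseteq> I" "K \<noteq> {0}"
      with I I_least[of K] show "K = I"
        using subspace_dim_equal gr_idealD(1) by (meson order_trans)
    qed (use I in auto)
    obtain x where "x \<in> I" "x \<noteq> 0"
      using I subspace_0[OF gr_idealD(1)] by blast
    then have "x \<notin> perp I" using ideal_Int_perp_trivial I by blast
    with \<open>x \<in> I\<close> I have "S \<inter> perp I \<subset> S" by blast
    then have "dim (S \<inter> perp I) < dim S"
      using dim_psubset gr_idealD(1) less.prems subspace_inter subspace_perp
      by (metis span_eq_iff)
    moreover have "gr_ideal (S \<inter> perp I)"
      using less.prems I by (simp add: graded_ideal_Int graded_ideal_perp)
    ultimately obtain m J where "orthogonal_decomposition (S \<inter> perp I) m J"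
      using less.hyps by blast
    with less.prems I \<open>simple_sub scale mul A0 A1 I\<close> show ?thesis
      using orthogonal_decomposition_insert by blast
  qed
qed

end

theorem mainTheorem14:
  fixes scale :: "'k::{alg_closed_field, field_char_0} \<Rightarrow> 'v::ab_group_add \<Rightarrow> 'v"
    and mul :: "'v \<Rightarrow> 'v \<Rightarrow> 'v"
    and A0 A1 :: "'v set"
    and B :: "'v \<Rightarrow> 'v \<Rightarrow> 'k"
  assumes "superalgebra scale mul A0 A1"
    and "assoc_mul mul"
    and "finite_dim scale"
    and "even_symmetric scale mul A0 A1 B"
    and "semisimple_even_bimodule scale mul A0"
    and "Ann mul = {0}"
  shows "\<exists>(m::nat) (I :: nat \<Rightarrow> 'v set).
     (\<forall>k<m. graded_ideal scale mul A0 A1 UNIV (I k)) \<and>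
     (\<forall>k<m. simple_sub scale mul A0 A1 (I k)) \<and>
     (\<forall>k<m. \<forall>x\<in>I k. (\<forall>y\<in>I k. B x y = 0) \<longrightarrow> x = 0) \<and>
     (\<forall>j<m. \<forall>k<m. j \<noteq> k \<longrightarrow> (\<forall>x\<in>I j. \<forall>y\<in>I k. B x y = 0)) \<and>
     (\<forall>v. \<exists>f. (\<forall>k<m. f k \<in> I k) \<and> v = (\<Sum>k<m. f k)) \<and>
     (\<forall>f. (\<forall>k<m. f k \<in> I k) \<and> (\<Sum>k<m. f k) = 0 \<longrightarrow> (\<forall>k<m. f k = 0))"
proof -
  obtain Basis where "finite_dimensional_vector_space scale Basis"
    using assms(3) unfolding finite_dim_def by blast
  with assms interpret semisimple_even_symmetric_superalgebra scale Basis mul A0 A1 B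
    by (simp add: semisimple_even_symmetric_superalgebra_def
        semisimple_even_symmetric_superalgebra_axioms_def even_symmetric_superalgebra_def)
  obtain m I where decomposition: "orthogonal_decomposition UNIV m I"
    using orthogonal_decomposition_exists[OF graded_ideal_UNIV] by blast
  then have "\<forall>k<m. \<forall>x\<in>I k. (\<forall>y\<in>I k. B x y = 0) \<longrightarrow> x = 0"
    unfolding orthogonal_decomposition_def using B_nondegenerate_on_ideal by blast
  with decomposition show ?thesis
    unfolding orthogonal_decomposition_def by (intro exI[of _ m] exI[of _ I]) simp
qed

end
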